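(* Let $R$ be the set of pairs $(\lambda,\mu)$ with $\lambda$ a triangular partition and $\mu$ a partition whose parts are nonnegative integers (zero parts allowed, counted in $\ell(\mu)$). Let $A_1$ be the set of pairs $(X,Y)$ with $X$ a partition into distinct positive parts, $Y$ a partition into nonnegative parts, and $a(Y)<s(X)$; let $A_2$ be the set of pairs $(X,Y)$ with $X$ a partition into distinct positive parts, $Y$ a nonempty triangular partition, and $a(Y)<s(X)$. For $(\lambda,\mu)\in R$ let $k=\min(\ell(\lambda),\ell(\mu))$, $p=\max(\ell(\lambda),\ell(\mu))$, $\nu=\lambda+\mu=(\nu_1,\dots,\nu_p)$, and set $\phi(\lambda,\mu)=((\nu_1,\dots,\nu_k),(\nu_{k+1},\dots,\nu_p))$. Then $\phi$ is a bijection from $R$ onto $A_1\sqcup A_2$ such that, writing $\phi(\lambda,\mu)=(X,Y)$: $|\lambda|+|\mu|=|X|+|Y|$; if $\ell(\lambda)\le\ell(\mu)$ then $(X,Y)\in A_1$, $\ell(X)=\ell(\lambda)$ and $\ell(X)+\ell(Y)=\ell(\mu)$; if $\ell(\lambda)>\ell(\mu)$ then $(X,Y)\in A_2$, $\ell(X)=\ell(\mu)$ and $\ell(X)+\ell(Y)=\ell(\lambda)$.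
   Context: A partition is a weakly decreasing finite sequence of integers; $\ell(A)$ is its number of parts, $|A|$ the sum of its parts, $a(A)$ its largest part and $s(A)$ its smallest part, with the conventions $a(\emptyset)=-\infty$... more precisely, the condition $a(Y)<s(X)$ is taken to hold vacuously when $X$ or $Y$ is empty. A triangular partition is $(n,n-1,\dots,1)$ for some $n\ge0$. For partitions $A=(A_1,A_2,\dots)$ and $B=(B_1,B_2,\dots)$, $A+B=(A_1+B_1,A_2+B_2,\dots)$ of length $\max(\ell(A),\ell(B))$, where missing parts are treated as $0$. *)

theory Defs
  imports Main
begin

text \<open>Partitions are represented as lists of natural numbers (weakly decreasing);
  zero parts are allowed and counted in the length.\<close>

definition is_partition :: "nat list \<Rightarrow> bool" where
  "is_partition xs \<longleftrightarrow> sorted_wrt (\<ge>) xs"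

definition triangular :: "nat \<Rightarrow> nat list" where
  "triangular n = rev [1..<Suc n]"

definition is_triangular :: "nat list \<Rightarrow> bool" where
  "is_triangular xs \<longleftrightarrow> (\<exists>n. xs = triangular n)"

definition distinct_pos_partition :: "nat list \<Rightarrow> bool" where
  "distinct_pos_partition xs \<longleftrightarrow> sorted_wrt (>) xs \<and> (\<forall>x\<in>set xs. 0 < x)"

text \<open>a(Y) < s(X), vacuous when X or Y is empty.\<close>
definition sep :: "nat list \<Rightarrow> nat list \<Rightarrow> bool" where
  "sep X Y \<longleftrightarrow> X = [] \<or> Y = [] \<or> hd Y < last X"

definition padd :: "nat list \<Rightarrow> nat list \<Rightarrow> nat list" where
  "padd A B = map (\<lambda>i. (if i < length A then A ! i else 0) + (if i < length B then B ! i else 0))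
                  [0..<max (length A) (length B)]"

definition R_set :: "(nat list \<times> nat list) set" where
  "R_set = {(l, m). is_triangular l \<and> is_partition m}"

definition A1_set :: "(nat list \<times> nat list) set" where
  "A1_set = {(X, Y). distinct_pos_partition X \<and> is_partition Y \<and> sep X Y}"

definition A2_set :: "(nat list \<times> nat list) set" where
  "A2_set = {(X, Y). distinct_pos_partition X \<and> is_triangular Y \<and> Y \<noteq> [] \<and> sep X Y}"

definition phi :: "nat list \<Rightarrow> nat list \<Rightarrow> nat list \<times> nat list" where
  "phi l m = (let k = min (length l) (length m); \<nu> = padd l m in (take k \<nu>, drop k \<nu>))"

definition phi_tagged :: "nat list \<times> nat list \<Rightarrow> (nat list \<times> nat list) + (nat list \<times> nat list)" where
  "phi_tagged p = (case p of (l, m) \<Rightarrow>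
     if length l \<le> length m then Inl (phi l m) else Inr (phi l m))"

end

theory Submission imports Defs begin

(* For a triangular partition l = (n, n-1, ..., 1) the sum l + m adds the
   "staircase" n - i to the i-th part of m (0-based).  Hence phi (triangular n) m
   is (stair_add n (take n m), drop n m) when n <= length m, and
   (stair_add n m, triangular (n - length m)) when length m < n.
   Adding a staircase turns a weakly decreasing list into a strictly decreasing one,
   and subtracting it undoes this; the separation condition a(Y) < s(X) is exactly
   what makes the subtraction land in the nonnegative integers and keeps the
   concatenation weakly decreasing. *)

lemma length_triangular [simp]: "length (triangular n) = n"
  by (simp add: triangular_def)

lemma nth_triangular: "i < n \<Longrightarrow> triangular n ! i = n - i"
  unfolding triangular_def by (simp add: rev_nth del: upt_Suc)

lemma triangular_eq_Nil_iff [simp]: "triangular n = [] \<longleftrightarrow> n = 0"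
  by (metis length_triangular length_0_conv)

lemma hd_triangular: "0 < n \<Longrightarrow> hd (triangular n) = n"
  by (subst hd_conv_nth) (auto simp: nth_triangular)

lemma drop_triangular: "drop k (triangular n) = triangular (n - k)"
  by (rule nth_equalityI) (auto simp: nth_triangular)

lemma length_padd [simp]: "length (padd A B) = max (length A) (length B)"
  by (simp add: padd_def)

lemma nth_padd: "i < max (length A) (length B) \<Longrightarrow> padd A B ! i =
  (if i < length A then A ! i else 0) + (if i < length B then B ! i else 0)"
  by (simp add: padd_def)

lemma padd_Nil [simp]: "padd [] B = B"
  by (rule nth_equalityI) (auto simp: nth_padd)

lemma padd_Nil2 [simp]: "padd A [] = A"
  by (rule nth_equalityI) (auto simp: nth_padd)

lemma padd_Cons [simp]: "padd (a # A) (b # B) = (a + b) # padd A B"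
  by (rule nth_equalityI) (auto simp: nth_padd nth_Cons split: nat.splits)

lemma sum_list_padd: "sum_list (padd A B) = sum_list A + sum_list B"
proof (induction A arbitrary: B)
  case Nil then show ?case by simp
next
  case (Cons a A) then show ?case by (cases B) auto
qed

lemma drop_padd_right: "length A \<le> length B \<Longrightarrow> drop (length A) (padd A B) = drop (length A) B"
  by (rule nth_equalityI) (auto simp: nth_padd max_def)

lemma drop_padd_left: "length B \<le> length A \<Longrightarrow> drop (length B) (padd A B) = drop (length B) A"
  by (rule nth_equalityI) (auto simp: nth_padd max_def)

lemma phi_sum:
  assumes "phi l m = (X, Y)"
  shows "sum_list l + sum_list m = sum_list X + sum_list Y"
proof -
  have "X @ Y = padd l m"
    using assms unfolding phi_def Let_def by (metis append_take_drop_id prod.inject)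
  then show ?thesis by (metis sum_list_append sum_list_padd)
qed

lemma phi_lengths:
  assumes "phi l m = (X, Y)"
  shows "length X = min (length l) (length m)"
    and "length X + length Y = max (length l) (length m)"
  using assms by (auto simp: phi_def Let_def)

lemma sorted_strict_nth_gap:
  assumes "sorted_wrt (>) X" "i \<le> j" "j < length X"
  shows "X ! j + (j - i) \<le> X ! i"
  using assms(2,3)
proof (induction j)
  case 0 then show ?case by simp
next
  case (Suc j)
  show ?case
  proof (cases "i = Suc j")
    case False
    with Suc have "X ! j + (j - i) \<le> X ! i" by auto
    moreover have "X ! Suc j < X ! j"
      using Suc.prems assms(1) sorted_wrt_nth_less by fastforce
    ultimately show ?thesis using False Suc.prems by linarith
  qed simp
qed

lemma sorted_strict_staircase_bound:
  assumes "sorted_wrt (>) X" "X \<noteq> [] \<Longrightarrow> c < last X" "i < length X"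
  shows "length X + c - i \<le> X ! i"
proof -
  have "X \<noteq> []" using assms(3) by auto
  then have "last X + (length X - 1 - i) \<le> X ! i"
    using sorted_strict_nth_gap[OF assms(1), of i "length X - 1"] assms(3)
    by (simp add: last_conv_nth)
  with assms(2,3) show ?thesis by fastforce
qed

lemma partition_nth_mono: "is_partition m \<Longrightarrow> i \<le> j \<Longrightarrow> j < length m \<Longrightarrow> m ! j \<le> m ! i"
  unfolding is_partition_def by (metis order.order_iff_strict sorted_wrt_nth_less)

section \<open>Adding and subtracting a staircase\<close>

definition stair_add :: "nat \<Rightarrow> nat list \<Rightarrow> nat list" where
  "stair_add n M = map (\<lambda>i. M ! i + (n - i)) [0..<length M]"

definition stair_sub :: "nat \<Rightarrow> nat list \<Rightarrow> nat list" where
  "stair_sub n X = map (\<lambda>i. X ! i - (n - i)) [0..<length X]"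

lemma length_stair_add [simp]: "length (stair_add n M) = length M"
  by (simp add: stair_add_def)

lemma length_stair_sub [simp]: "length (stair_sub n X) = length X"
  by (simp add: stair_sub_def)

lemma stair_add_eq_Nil_iff [simp]: "stair_add n M = [] \<longleftrightarrow> M = []"
  by (simp add: stair_add_def)

lemma nth_stair_add [simp]: "i < length M \<Longrightarrow> stair_add n M ! i = M ! i + (n - i)"
  by (simp add: stair_add_def)

lemma nth_stair_sub [simp]: "i < length X \<Longrightarrow> stair_sub n X ! i = X ! i - (n - i)"
  by (simp add: stair_sub_def)

lemma stair_sub_add [simp]: "stair_sub n (stair_add n M) = M"
  by (rule nth_equalityI) auto

lemma stair_add_sub:
  "(\<And>i. i < length X \<Longrightarrow> n - i \<le> X ! i) \<Longrightarrow> stair_add n (stair_sub n X) = X"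
  by (rule nth_equalityI) auto

lemma last_stair_add:
  "M \<noteq> [] \<Longrightarrow> last (stair_add n M) = last M + (n - (length M - 1))"
  by (simp add: last_conv_nth[of "stair_add n M"] last_conv_nth[of M])

lemma stair_add_distinct_pos:
  assumes "is_partition M" "length M \<le> n"
  shows "distinct_pos_partition (stair_add n M)"
  unfolding distinct_pos_partition_def sorted_wrt_iff_nth_less
proof (intro conjI allI impI ballI)
  fix i j assume "i < j" "j < length (stair_add n M)"
  then show "stair_add n M ! j < stair_add n M ! i"
    using partition_nth_mono[OF assms(1), of i j] assms(2) by simp
next
  fix x assume "x \<in> set (stair_add n M)"
  then show "0 < x" using assms(2) by (auto simp: in_set_conv_nth)
qed

lemma stair_sub_partition:
  assumes "sorted_wrt (>) X" "\<And>i. i < length X \<Longrightarrow> n - i \<le> X ! i"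
  shows "is_partition (stair_sub n X)"
  unfolding is_partition_def sorted_wrt_iff_nth_less
proof (intro allI impI)
  fix i j assume ij: "i < j" "j < length (stair_sub n X)"
  then have "X ! j + (j - i) \<le> X ! i" "n - j \<le> X ! j"
    using sorted_strict_nth_gap[OF assms(1), of i j] assms(2) by auto
  then show "stair_sub n X ! j \<le> stair_sub n X ! i" using ij by simp
qed

lemma stair_sub_ge_last:
  assumes "sorted_wrt (>) X" "x \<in> set (stair_sub (length X) X)"
  shows "last X - 1 \<le> x"
proof -
  obtain i where i: "i < length X" "x = X ! i - (length X - i)"
    using assms(2) by (auto simp: in_set_conv_nth)
  moreover have "X \<noteq> []" using i by auto
  ultimately have "last X + (length X - 1 - i) \<le> X ! i"
    using sorted_strict_nth_gap[OF assms(1), of i "length X - 1"] by (simp add: last_conv_nth)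
  with i show ?thesis by linarith
qed

lemma take_padd_triangular:
  "k \<le> n \<Longrightarrow> k \<le> length m \<Longrightarrow> take k (padd (triangular n) m) = stair_add n (take k m)"
  by (rule nth_equalityI) (auto simp: nth_padd nth_triangular)

lemma phi_triangular_long:
  "n \<le> length m \<Longrightarrow> phi (triangular n) m = (stair_add n (take n m), drop n m)"
  using take_padd_triangular[of n n m] drop_padd_right[of "triangular n" m]
  by (simp add: phi_def min_def)

lemma phi_triangular_short:
  "length m < n \<Longrightarrow> phi (triangular n) m = (stair_add n m, triangular (n - length m))"
  using take_padd_triangular[of "length m" n m] drop_padd_left[of m "triangular n"]
  by (simp add: phi_def min_def drop_triangular)

lemma phi_long_in_A1:
  assumes "is_partition m" "n \<le> length m"
  shows "phi (triangular n) m \<in> A1_set"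
proof -
  have "distinct_pos_partition (stair_add n (take n m))"
    using assms by (intro stair_add_distinct_pos) (auto simp: is_partition_def sorted_wrt_take)
  moreover have "is_partition (drop n m)"
    using assms(1) by (simp add: is_partition_def sorted_wrt_drop)
  moreover have "sep (stair_add n (take n m)) (drop n m)"
  proof (cases "n = 0 \<or> n = length m")
    case False
    then have nonempty: "take n m \<noteq> []" using assms by auto
    then have "last (take n m) = m ! (n - 1)"
      using False assms by (simp add: last_conv_nth[of "take n m"])
    then have "last (stair_add n (take n m)) = m ! (n - 1) + 1"
      using False nonempty assms(2) by (simp add: last_stair_add min_def)
    moreover have "hd (drop n m) = m ! n"
      using False assms by (simp add: hd_drop_conv_nth)
    ultimately show ?thesis
      using partition_nth_mono[OF assms(1), of "n - 1" n] False assms by (simp add: sep_def)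
  qed (auto simp: sep_def)
  ultimately show ?thesis using assms by (simp add: A1_set_def phi_triangular_long)
qed

lemma phi_short_in_A2:
  assumes "is_partition m" "length m < n"
  shows "phi (triangular n) m \<in> A2_set"
proof -
  have "distinct_pos_partition (stair_add n m)"
    using assms by (intro stair_add_distinct_pos) auto
  moreover have "sep (stair_add n m) (triangular (n - length m))"
  proof (cases "m = []")
    case False
    have "last (stair_add n m) = last m + (n - (length m - 1))"
      using False by (rule last_stair_add)
    moreover have "0 < length m" using False by simp
    ultimately have "n - length m < last (stair_add n m)"
      using assms(2) by arith
    then show ?thesis using assms(2) by (simp add: sep_def hd_triangular)
  qed (simp add: sep_def)
  ultimately show ?thesis
    using assms by (auto simp: A2_set_def is_triangular_def phi_triangular_short)
qed

lemma phi_properties: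
  assumes "(l, m) \<in> R_set" "phi l m = (X, Y)"
  shows "sum_list l + sum_list m = sum_list X + sum_list Y \<and>
       (length l \<le> length m \<longrightarrow>
          (X, Y) \<in> A1_set \<and> length X = length l \<and> length X + length Y = length m) \<and>
       (length l > length m \<longrightarrow>
          (X, Y) \<in> A2_set \<and> length X = length m \<and> length X + length Y = length l)"
proof -
  obtain n where l: "l = triangular n" and m: "is_partition m"
    using assms(1) by (auto simp: R_set_def is_triangular_def)
  show ?thesis
    using phi_sum[OF assms(2)] phi_lengths[OF assms(2)] assms(2)
      phi_long_in_A1[OF m, of n] phi_short_in_A2[OF m, of n]
    by (auto simp: l)
qed

section \<open>The inverse map\<close>

definition phi_inv :: "(nat list \<times> nat list) + (nat list \<times> nat list) \<Rightarrow> nat list \<times> nat list" where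
  "phi_inv t = (case t of
     Inl (X, Y) \<Rightarrow> (triangular (length X), stair_sub (length X) X @ Y)
   | Inr (X, Y) \<Rightarrow> (triangular (length X + length Y), stair_sub (length X + length Y) X))"

lemma phi_inv_phi_tagged:
  assumes "(l, m) \<in> R_set"
  shows "phi_inv (phi_tagged (l, m)) = (l, m)"
proof -
  obtain n where l: "l = triangular n"
    using assms by (auto simp: R_set_def is_triangular_def)
  show ?thesis
    by (cases "n \<le> length m")
      (auto simp: l phi_tagged_def phi_inv_def phi_triangular_long phi_triangular_short)
qed

lemma phi_tagged_phi_inv_A1:
  assumes "(X, Y) \<in> A1_set"
  shows "phi_inv (Inl (X, Y)) \<in> R_set \<and> phi_tagged (phi_inv (Inl (X, Y))) = Inl (X, Y)"
proof -
  have X: "sorted_wrt (>) X" "\<And>x. x \<in> set X \<Longrightarrow> 0 < x"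
    and Y: "is_partition Y" and s: "sep X Y"
    using assms by (auto simp: A1_set_def distinct_pos_partition_def)
  define n where "n = length X"
  have bound: "n - i \<le> X ! i" if "i < length X" for i
    using sorted_strict_staircase_bound[OF X(1), of 0 i] X(2) that by (simp add: n_def)
  have above: "y \<le> x" if "x \<in> set (stair_sub n X)" "y \<in> set Y" for x y
  proof -
    have "y \<le> hd Y" using that(2) Y by (cases Y) (auto simp: is_partition_def)
    also have "hd Y < last X"
      using s that by (cases "X = []") (auto simp: sep_def stair_sub_def)
    finally show ?thesis using stair_sub_ge_last[OF X(1)] that(1) n_def by fastforce
  qed
  have "is_partition (stair_sub n X @ Y)"
    using stair_sub_partition[OF X(1) bound] Y above
    by (auto simp: is_partition_def sorted_wrt_append)
  moreover have "phi (triangular n) (stair_sub n X @ Y) = (X, Y)"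
    using phi_triangular_long[of n "stair_sub n X @ Y"] stair_add_sub[OF bound]
    by (simp add: n_def)
  ultimately show ?thesis
    by (auto simp: phi_inv_def n_def[symmetric] R_set_def is_triangular_def phi_tagged_def)
qed

lemma phi_tagged_phi_inv_A2:
  assumes "(X, Y) \<in> A2_set"
  shows "phi_inv (Inr (X, Y)) \<in> R_set \<and> phi_tagged (phi_inv (Inr (X, Y))) = Inr (X, Y)"
proof -
  obtain j where X: "sorted_wrt (>) X" and Y: "Y = triangular j" "0 < j" and s: "sep X Y"
    using assms by (auto simp: A2_set_def is_triangular_def distinct_pos_partition_def)
  define n where "n = length X + j"
  have bound: "n - i \<le> X ! i" if "i < length X" for i
    using sorted_strict_staircase_bound[OF X, of j i] s Y that
    by (auto simp: n_def sep_def hd_triangular)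
  have "is_partition (stair_sub n X)"
    using stair_sub_partition[OF X bound] .
  moreover have "phi (triangular n) (stair_sub n X) = (X, Y)"
    using phi_triangular_short[of "stair_sub n X" n] stair_add_sub[OF bound] Y
    by (simp add: n_def)
  ultimately show ?thesis
    using Y by (auto simp: phi_inv_def n_def R_set_def is_triangular_def phi_tagged_def)
qed

theorem mainTheorem6:
  shows "bij_betw phi_tagged R_set (A1_set <+> A2_set) \<and>
    (\<forall>l m X Y. (l, m) \<in> R_set \<longrightarrow> phi l m = (X, Y) \<longrightarrow>
       sum_list l + sum_list m = sum_list X + sum_list Y \<and>
       (length l \<le> length m \<longrightarrow>
          (X, Y) \<in> A1_set \<and> length X = length l \<and> length X + length Y = length m) \<and>
       (length l > length m \<longrightarrow>
          (X, Y) \<in> A2_set \<and> length X = length m \<and> length X + length Y = length l))"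
proof
  have into: "phi_tagged p \<in> A1_set <+> A2_set" if "p \<in> R_set" for p
  proof -
    obtain l m X Y where p: "p = (l, m)" and e: "phi l m = (X, Y)"
      by (metis surj_pair)
    show ?thesis
      using phi_properties[OF that[unfolded p] e] e by (auto simp: p phi_tagged_def)
  qed
  show "bij_betw phi_tagged R_set (A1_set <+> A2_set)"
    by (rule bij_betw_byWitness[where f' = phi_inv])
      (use into phi_inv_phi_tagged phi_tagged_phi_inv_A1 phi_tagged_phi_inv_A2 in auto)
qed (use phi_properties in blast)

end
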